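(* Let $n\in\mathbb{N}$ and let $A$ be an $n\times n$ acyclic real symmetric matrix. Suppose $\lambda$ is an eigenvalue of $A$ of multiplicity one and $u\in[n]$ is an index with $\phi(A-u,\lambda)\neq 0$. Define $\boldsymbol{\alpha}\in\mathbb{R}^n$ by \[ \boldsymbol{\alpha}(v)=\begin{cases} W(P_{u,v})\,\phi(A-P_{u,v},\lambda) & \text{if there is a path from } u \text{ to } v \text{ in } G(A),\\ 0 & \text{otherwise}.\end{cases} \] Then $\boldsymbol{\alpha}$ is a $\lambda$-eigenvector of $A$.
   Context: $[n]=\{1,\ldots,n\}$. For a real symmetric $n\times n$ matrix $A$, its graph $G(A)$ has vertex set $[n]$, with $u\neq v$ adjacent iff $A_{uv}\neq 0$; each edge $uv$ has weight $w(uv)=A_{uv}$ and each vertex $v$ has weight $w(v)=A_{vv}$. $A$ is called acyclic if $G(A)$ is a forest (i.e. $A$ is the adjacency matrix of a weighted forest with nonzero real edge weights and possibly vertex weights). When $u,v$ lie in the same component of the forest, $P_{u,v}$ denotes the unique path between them (a single vertex if $u=v$), and $W(P_{u,v})$ is the product of the weights of the edges of $P_{u,v}$ (equal to $1$ if $u=v$). For an index set (or vertex set of a subgraph) $U$, $A-U$ is the matrix obtained from $A$ by deleting rows and columns indexed by $U$. $\phi(B,\lambda)=\det(\lambda \mathbb{I}-B)$ is the characteristic polynomial evaluated at $\lambda$, with $\phi$ of the empty matrix equal to $1$. *)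

theory Defs
  imports "Jordan_Normal_Form.Char_Poly" "Jordan_Normal_Form.DL_Submatrix"
begin

text \<open>Matrices are Jordan_Normal_Form matrices; indices are 0,...,n-1 (instead of 1,...,n).\<close>

definition mat_adj :: "real mat \<Rightarrow> nat \<Rightarrow> nat \<Rightarrow> bool" where
  "mat_adj A u v \<longleftrightarrow> u \<noteq> v \<and> u < dim_row A \<and> v < dim_row A \<and> A $$ (u, v) \<noteq> 0"

definition is_gpath :: "real mat \<Rightarrow> nat list \<Rightarrow> bool" where
  "is_gpath A p \<longleftrightarrow> p \<noteq> [] \<and> distinct p \<and> set p \<subseteq> {..<dim_row A} \<and>
     (\<forall>i. Suc i < length p \<longrightarrow> mat_adj A (p ! i) (p ! Suc i))"

definition gpath_from :: "real mat \<Rightarrow> nat \<Rightarrow> nat \<Rightarrow> nat list \<Rightarrow> bool" where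
  "gpath_from A u v p \<longleftrightarrow> is_gpath A p \<and> hd p = u \<and> last p = v"

definition is_gcycle :: "real mat \<Rightarrow> nat list \<Rightarrow> bool" where
  "is_gcycle A c \<longleftrightarrow> length c \<ge> 3 \<and> is_gpath A c \<and> mat_adj A (last c) (hd c)"

definition acyclic_mat :: "real mat \<Rightarrow> bool" where
  "acyclic_mat A \<longleftrightarrow> (\<nexists>c. is_gcycle A c)"

text \<open>The (unique, in a forest) path P_{u,v}.\<close>
definition upath :: "real mat \<Rightarrow> nat \<Rightarrow> nat \<Rightarrow> nat list" where
  "upath A u v = (THE p. gpath_from A u v p)"

definition path_weight :: "real mat \<Rightarrow> nat list \<Rightarrow> real" where
  "path_weight A p = (\<Prod>i<length p - 1. A $$ (p ! i, p ! Suc i))"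

definition del_mat :: "real mat \<Rightarrow> nat set \<Rightarrow> real mat" where
  "del_mat A U = submatrix A ({..<dim_row A} - U) ({..<dim_col A} - U)"

text \<open>phi(B, lambda) = det(lambda I - B).\<close>
definition phi :: "real mat \<Rightarrow> real \<Rightarrow> real" where
  "phi B x = poly (char_poly B) x"

definition alpha_vec :: "real mat \<Rightarrow> nat \<Rightarrow> real \<Rightarrow> real vec" where
  "alpha_vec A u x = vec (dim_row A) (\<lambda>v.
     if \<exists>p. gpath_from A u v p
     then path_weight A (upath A u v) * phi (del_mat A (set (upath A u v))) x
     else 0)"

end

theory Submission
  imports Defs
begin

text \<open>
  Write \<open>B = \<lambda>I - A\<close>. Then \<open>\<phi>(A - U, \<lambda>)\<close> is the principal minor of \<open>B\<close> on the complement
  of \<open>U\<close>, and \<open>A\<alpha> = \<lambda>\<alpha>\<close> says \<open>\<Sum>\<^sub>k B\<^sub>j\<^sub>k \<alpha>(k) = 0\<close> for every \<open>j\<close>.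
  In the Leibniz expansion of a principal minor, a permutation with a cycle of length at least 3
  contributes nothing, since its nonzero entries would trace a cycle of the forest. This yields the
  vertex expansion \<open>\<phi>(S) = B\<^sub>v\<^sub>v \<phi>(S - v) - \<Sum>\<^sub>w B\<^sub>v\<^sub>w B\<^sub>w\<^sub>v \<phi>(S - v - w)\<close>.
  For \<open>j = u\<close> it turns the sum into \<open>\<phi>(A, \<lambda>) = 0\<close>. For \<open>j \<noteq> u\<close> reachable from \<open>u\<close>, with
  predecessor \<open>i\<close> on \<open>P\<^sub>u\<^sub>,\<^sub>j\<close>, the diagonal term and the neighbours of \<open>j\<close> off the path
  combine into \<open>W(P\<^sub>u\<^sub>,\<^sub>j) \<phi>(A - P\<^sub>u\<^sub>,\<^sub>i, \<lambda>)\<close>, no other vertex of the path is adjacent to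
  \<open>j\<close>, and the term of \<open>i\<close> cancels by symmetry. If \<open>j\<close> is unreachable, so are its neighbours.
\<close>

section \<open>Principal minors\<close>

definition leibniz_term :: "('i \<Rightarrow> 'i \<Rightarrow> 'a :: comm_ring_1) \<Rightarrow> 'i set \<Rightarrow> ('i \<Rightarrow> 'i) \<Rightarrow> 'a" where
  "leibniz_term B S p = of_int (sign p) * (\<Prod>i\<in>S. B i (p i))"

definition det_on :: "('i \<Rightarrow> 'i \<Rightarrow> 'a :: comm_ring_1) \<Rightarrow> 'i set \<Rightarrow> 'a" where
  "det_on B S = (\<Sum>p | p permutes S. leibniz_term B S p)"

lemma det_on_cong:
  assumes "\<And>i j. i \<in> S \<Longrightarrow> j \<in> S \<Longrightarrow> B i j = B' i j"
  shows "det_on B S = det_on B' S"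
  unfolding det_on_def leibniz_term_def using assms
  by (intro sum.cong prod.cong refl arg_cong2[where f = "(*)"]) (auto simp: permutes_in_image)

lemma det_on_reindex:
  assumes f: "bij_betw f T S" and fin: "finite T"
  shows "det_on (\<lambda>i j. B (f i) (f j)) T = det_on B S"
proof -
  have bij: "bij_betw (map_permutation T f) {p. p permutes T} {p. p permutes S}"
  proof -
    have "map_permutation T f = (\<lambda>p x. if x \<in> S then f (p (inv_into T f x)) else x)"
      using f by (auto simp: fun_eq_iff map_permutation_def restrict_id_def bij_betw_def)
    then show ?thesis using bij_betw_permutations[OF f] by simp
  qed
  have inj: "inj_on f T" using f by (rule bij_betw_imp_inj_on)
  have "det_on B S = (\<Sum>p | p permutes T. leibniz_term B S (map_permutation T f p))"
    unfolding det_on_def by (rule sum.reindex_bij_betw[OF bij, symmetric])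
  also have "\<dots> = det_on (\<lambda>i j. B (f i) (f j)) T"
    unfolding det_on_def
  proof (rule sum.cong[OF refl])
    fix p assume "p \<in> {p. p permutes T}"
    then have p: "p permutes T" by simp
    have "(\<Prod>i\<in>S. B i (map_permutation T f p i)) = (\<Prod>i\<in>T. B (f i) (map_permutation T f p (f i)))"
      by (rule prod.reindex_bij_betw[OF f, symmetric])
    also have "\<dots> = (\<Prod>i\<in>T. B (f i) (f (p i)))"
      using inj by (intro prod.cong refl) (simp add: map_permutation_apply)
    finally show "leibniz_term B S (map_permutation T f p) = leibniz_term (\<lambda>i j. B (f i) (f j)) T p"
      using sign_map_permutation[OF inj p fin] by (simp add: leibniz_term_def)
  qed
  finally show ?thesis ..
qed

lemma leibniz_term_insert_fixed:
  assumes "p permutes S" "v \<notin> S" "finite S"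
  shows "leibniz_term B (insert v S) p = B v v * leibniz_term B S p"
  using assms by (simp add: leibniz_term_def permutes_not_in)

lemma leibniz_term_insert_transpose:
  assumes r: "r permutes S" and "v \<notin> S" "w \<notin> S" "v \<noteq> w" "finite S"
  shows "leibniz_term B (insert v (insert w S)) (Transposition.transpose v w \<circ> r)
       = - (B v w * B w v) * leibniz_term B S r"
proof -
  have "sign (Transposition.transpose v w \<circ> r) = - sign r"
    using assms sign_compose[OF permutation_swap_id permutes_imp_permutation[OF _ r]]
    by (simp add: sign_swap_id)
  moreover have "(\<Prod>i\<in>S. B i (Transposition.transpose v w (r i))) = (\<Prod>i\<in>S. B i (r i))"
    using assms by (intro prod.cong refl) (auto simp: permutes_in_image transpose_def)
  ultimately show ?thesis
    using assms by (simp add: leibniz_term_def permutes_not_in)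
qed

lemma det_on_insert:
  assumes "finite S" "v \<notin> S"
  shows "det_on B (insert v S) = B v v * det_on B S
    + (\<Sum>w\<in>S. \<Sum>q | q permutes S. leibniz_term B (insert v S) (Transposition.transpose v w \<circ> q))"
proof -
  have "det_on B (insert v S) = (\<Sum>w\<in>insert v S. \<Sum>q | q permutes S.
      leibniz_term B (insert v S) (Transposition.transpose v w \<circ> q))"
    unfolding det_on_def by (rule sum_over_permutations_insert[OF assms])
  also have "\<dots> = (\<Sum>q | q permutes S. leibniz_term B (insert v S) q)
    + (\<Sum>w\<in>S. \<Sum>q | q permutes S. leibniz_term B (insert v S) (Transposition.transpose v w \<circ> q))"
    using assms by (simp add: sum.insert)
  also have "(\<Sum>q | q permutes S. leibniz_term B (insert v S) q) = B v v * det_on B S"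
    using assms by (simp add: det_on_def sum_distrib_left leibniz_term_insert_fixed)
  finally show ?thesis .
qed

lemma sum_leibniz_term_transpose:
  assumes fin: "finite S" and v: "v \<notin> S" and w: "w \<in> S"
  shows "(\<Sum>q | q permutes S. leibniz_term B (insert v S) (Transposition.transpose v w \<circ> q))
    = - (B v w * B w v * det_on B (S - {w}))
      + (\<Sum>c\<in>S - {w}. \<Sum>r | r permutes S - {w}. leibniz_term B (insert v S)
           (Transposition.transpose v w \<circ> Transposition.transpose w c \<circ> r))"
proof -
  define S' where "S' = S - {w}"
  define f where "f q = leibniz_term B (insert v S) (Transposition.transpose v w \<circ> q)" for q
  have S': "S = insert w S'" "finite S'" "w \<notin> S'" "v \<notin> S'" "v \<noteq> w"
    using fin v w by (auto simp: S'_def)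
  have "(\<Sum>q | q permutes S. f q)
      = (\<Sum>c\<in>insert w S'. \<Sum>r | r permutes S'. f (Transposition.transpose w c \<circ> r))"
    unfolding S'(1) by (rule sum_over_permutations_insert[OF S'(2,3)])
  also have "\<dots> = (\<Sum>r | r permutes S'. f r)
      + (\<Sum>c\<in>S'. \<Sum>r | r permutes S'. f (Transposition.transpose w c \<circ> r))"
    using S' by (simp add: sum.insert)
  also have "(\<Sum>r | r permutes S'. f r) = - (B v w * B w v * det_on B S')"
    using S' leibniz_term_insert_transpose[of _ S' v w B]
    by (simp add: f_def det_on_def sum_distrib_left sum_negf)
  finally show ?thesis by (simp only: f_def S'_def comp_assoc)
qed

lemma det_eq_det_on:
  assumes "M \<in> carrier_mat n n"
  shows "det M = det_on (\<lambda>i j. M $$ (i, j)) {..<n}"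
  unfolding det_def'[OF assms] det_on_def leibniz_term_def atLeast0LessThan ..

lemma bij_betw_pick:
  assumes "finite S"
  shows "bij_betw (pick S) {..<card S} S"
proof (rule bij_betw_imageI)
  show "inj_on (pick S) {..<card S}"
    by (rule inj_onI) (metis card_pick_le lessThan_iff)
  show "pick S ` {..<card S} = S"
  proof
    show "pick S ` {..<card S} \<subseteq> S" using pick_in_set_le by auto
    show "S \<subseteq> pick S ` {..<card S}"
    proof
      fix i assume i: "i \<in> S"
      have "card {a\<in>S. a < i} < card S"
        using i assms by (intro psubset_card_mono) auto
      then show "i \<in> pick S ` {..<card S}" using pick_card_in_set[OF i] by force
    qed
  qed
qed

section \<open>Principal minors of \<open>\<lambda>I - A\<close> for acyclic \<open>A\<close>\<close>

definition char_entry :: "'a :: comm_ring_1 mat \<Rightarrow> 'a \<Rightarrow> nat \<Rightarrow> nat \<Rightarrow> 'a" where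
  "char_entry A x i j = (if i = j then x else 0) - A $$ (i, j)"

lemma phi_eq_det_on:
  assumes "A \<in> carrier_mat n n"
  shows "phi A x = det_on (char_entry A x) {..<n}"
proof -
  have "phi A x = det (- char_matrix A x)"
    unfolding phi_def by (rule char_poly_matrix[OF assms])
  also have "\<dots> = det_on (char_entry A x) {..<n}"
    using assms by (subst det_eq_det_on[of _ n])
      (auto intro!: det_on_cong simp: char_matrix_def char_entry_def)
  finally show ?thesis .
qed

lemma phi_del_mat:
  assumes A: "A \<in> carrier_mat n n"
  shows "phi (del_mat A U) x = det_on (char_entry A x) ({..<n} - U)"
proof -
  define S where "S = {..<n} - U"
  have S: "{i. i < n \<and> i \<in> S} = S" "finite S" by (auto simp: S_def)
  have del: "del_mat A U = submatrix A S S" using A by (simp add: del_mat_def S_def)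
  have dim: "del_mat A U \<in> carrier_mat (card S) (card S)"
    using A unfolding del carrier_mat_def by (simp add: dim_submatrix S(1))
  have pick: "bij_betw (pick S) {..<card S} S" by (rule bij_betw_pick[OF S(2)])
  have "phi (del_mat A U) x = det_on (char_entry (del_mat A U) x) {..<card S}"
    by (rule phi_eq_det_on[OF dim])
  also have "\<dots> = det_on (\<lambda>i j. char_entry A x (pick S i) (pick S j)) {..<card S}"
  proof (rule det_on_cong)
    fix i j assume ij: "i \<in> {..<card S}" "j \<in> {..<card S}"
    then have "pick S i = pick S j \<longleftrightarrow> i = j"
      using bij_betw_imp_inj_on[OF pick] by (auto dest: inj_onD)
    moreover have "submatrix A S S $$ (i, j) = A $$ (pick S i, pick S j)"
      using ij A by (intro submatrix_index) (auto simp: S)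
    ultimately show "char_entry (del_mat A U) x i j = char_entry A x (pick S i) (pick S j)"
      by (simp add: char_entry_def del)
  qed
  also have "\<dots> = det_on (char_entry A x) S"
    by (rule det_on_reindex[OF pick]) simp
  finally show ?thesis unfolding S_def .
qed

lemma mat_adj_if_char_entry_nonzero:
  assumes "A \<in> carrier_mat n n" "i < n" "j < n" "i \<noteq> j" "char_entry A x i j \<noteq> 0"
  shows "mat_adj A i j"
  using assms by (auto simp: char_entry_def mat_adj_def)

lemma permutes_long_cycle_list:
  assumes p: "p permutes S" and fin: "finite S" and v: "v \<in> S"
    and pv: "p v \<noteq> v" and ppv: "p (p v) \<noteq> v"
  obtains c where "3 \<le> length c" "distinct c" "set c \<subseteq> S" "hd c = v" "p (last c) = v"
    "\<And>i. Suc i < length c \<Longrightarrow> c ! Suc i = p (c ! i)"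
proof -
  obtain k0 where k0: "k0 > 0" "(p ^^ k0) v = v"
    using permutation_self[OF permutes_imp_permutation[OF fin p]] by blast
  define k where "k = (LEAST k. 0 < k \<and> (p ^^ k) v = v)"
  have k: "0 < k" "(p ^^ k) v = v"
    using LeastI[of "\<lambda>k. 0 < k \<and> (p ^^ k) v = v", OF conjI[OF k0]] by (simp_all add: k_def)
  have kmin: "(p ^^ m) v \<noteq> v" if "0 < m" "m < k" for m
    using not_less_Least[of m "\<lambda>k. 0 < k \<and> (p ^^ k) v = v"] that unfolding k_def by blast
  have "k \<noteq> 1" "k \<noteq> 2" using k pv ppv by (auto simp: numeral_2_eq_2)
  then have k3: "3 \<le> k" using k(1) by linarith
  define c where "c = map (\<lambda>i. (p ^^ i) v) [0..<k]"
  show thesis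
  proof
    show "3 \<le> length c" using k3 by (simp add: c_def)
    show "distinct c"
      unfolding c_def distinct_map using inj_on_funpow_least[OF k(2) kmin] by simp
    show "set c \<subseteq> S" using permutes_in_funpow_image[OF p v] by (auto simp: c_def)
    show "hd c = v" using k3 by (simp add: c_def hd_map upt_conv_Cons)
    have "last c = (p ^^ (k - 1)) v" using k3 by (simp add: c_def last_map)
    then show "p (last c) = v"
      using k k3 by (metis Suc_diff_1 comp_apply funpow.simps(2))
    show "c ! Suc i = p (c ! i)" if "Suc i < length c" for i
      using that by (simp add: c_def)
  qed
qed

lemma leibniz_term_long_cycle_eq_0:
  assumes A: "A \<in> carrier_mat n n" and acyc: "acyclic_mat A" and S: "S \<subseteq> {..<n}"
    and p: "p permutes S" and v: "v \<in> S" and pv: "p v \<noteq> v" and ppv: "p (p v) \<noteq> v"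
  shows "leibniz_term (char_entry A x) S p = 0"
proof (rule ccontr)
  assume nz: "leibniz_term (char_entry A x) S p \<noteq> 0"
  have fin: "finite S" using S finite_subset by blast
  have adj: "mat_adj A i (p i)" if "i \<in> S" "p i \<noteq> i" for i
  proof (rule mat_adj_if_char_entry_nonzero[OF A])
    show "char_entry A x i (p i) \<noteq> 0" using nz that fin by (auto simp: leibniz_term_def)
    show "i < n" "p i < n" using that S permutes_in_image[OF p] by auto
  qed (use that in auto)
  obtain c where c: "3 \<le> length c" "distinct c" "set c \<subseteq> S" "hd c = v" "p (last c) = v"
    and next_c: "\<And>i. Suc i < length c \<Longrightarrow> c ! Suc i = p (c ! i)"
    using permutes_long_cycle_list[OF p fin v pv ppv] by blast
  have "is_gcycle A c"
    unfolding is_gcycle_def is_gpath_def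
  proof (intro conjI allI impI)
    show "set c \<subseteq> {..<dim_row A}" using c(3) S A by auto
    fix i assume i: "Suc i < length c"
    then have "c ! i \<noteq> c ! Suc i" using c(2) by (simp add: nth_eq_iff_index_eq)
    then show "mat_adj A (c ! i) (c ! Suc i)"
      using adj[of "c ! i"] c(3) i next_c[OF i] by (simp add: subset_iff)
  next
    have "c \<noteq> []" using c(1) by auto
    then have "last c \<noteq> hd c"
      using c(1,2) by (simp add: last_conv_nth hd_conv_nth nth_eq_iff_index_eq)
    then show "mat_adj A (last c) (hd c)"
      using adj[of "last c"] c(1,3-5) by (metis last_in_set list.size(3) not_numeral_le_zero subsetD)
  qed (use c in auto)
  then show False using acyc by (simp add: acyclic_mat_def)
qed

lemma det_on_char_entry_expand_vertex:
  assumes A: "A \<in> carrier_mat n n" and acyc: "acyclic_mat A" and S: "S \<subseteq> {..<n}" and v: "v \<in> S"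
  shows "det_on (char_entry A x) S = char_entry A x v v * det_on (char_entry A x) (S - {v})
    - (\<Sum>w\<in>S - {v}. char_entry A x v w * char_entry A x w v * det_on (char_entry A x) (S - {v} - {w}))"
proof -
  let ?B = "char_entry A x"
  define S' where "S' = S - {v}"
  have S': "S = insert v S'" "finite S'" "v \<notin> S'"
    using v S finite_subset by (auto simp: S'_def)
  have long_cycles: "(\<Sum>c\<in>S' - {w}. \<Sum>r | r permutes S' - {w}. leibniz_term ?B S
      (Transposition.transpose v w \<circ> Transposition.transpose w c \<circ> r)) = 0" if w: "w \<in> S'" for w
  proof (intro sum.neutral ballI)
    fix c r assume c: "c \<in> S' - {w}" and "r \<in> {r. r permutes S' - {w}}"
    then have r: "r permutes S' - {w}" by simp
    have "v \<noteq> w" "c \<noteq> v" "c \<noteq> w" "r v = v" "r w = w"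
      using c w S'(3) permutes_not_in[OF r] by auto
    moreover have "Transposition.transpose v w \<circ> Transposition.transpose w c \<circ> r permutes S"
      using r c w S'(1) by (intro permutes_compose permutes_swap_id)
        (auto intro: permutes_subset)
    ultimately show "leibniz_term ?B S (Transposition.transpose v w \<circ> Transposition.transpose w c \<circ> r) = 0"
      by (intro leibniz_term_long_cycle_eq_0[OF A acyc S _ v]) auto
  qed
  have "det_on ?B S = ?B v v * det_on ?B S'
    + (\<Sum>w\<in>S'. \<Sum>q | q permutes S'. leibniz_term ?B S (Transposition.transpose v w \<circ> q))"
    unfolding S'(1) by (rule det_on_insert[OF S'(2,3)])
  also have "(\<Sum>w\<in>S'. \<Sum>q | q permutes S'. leibniz_term ?B S (Transposition.transpose v w \<circ> q))
    = (\<Sum>w\<in>S'. - (?B v w * ?B w v * det_on ?B (S' - {w})))"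
    using sum_leibniz_term_transpose[OF S'(2,3), of _ ?B, folded S'(1)] long_cycles
    by (intro sum.cong) simp_all
  finally show ?thesis by (simp add: S'_def sum_negf)
qed

section \<open>Walks and paths in \<open>G(A)\<close>\<close>

fun is_walk :: "real mat \<Rightarrow> nat list \<Rightarrow> bool" where
  "is_walk A [] = False"
| "is_walk A [x] = (x < dim_row A)"
| "is_walk A (x # y # xs) = (mat_adj A x y \<and> is_walk A (y # xs))"

lemma is_walk_iff:
  "is_walk A p \<longleftrightarrow> p \<noteq> [] \<and> set p \<subseteq> {..<dim_row A} \<and>
     (\<forall>i. Suc i < length p \<longrightarrow> mat_adj A (p ! i) (p ! Suc i))"
  by (induction A p rule: is_walk.induct) (auto simp: mat_adj_def nth_Cons split: nat.splits)

lemma is_gpath_iff_walk: "is_gpath A p \<longleftrightarrow> is_walk A p \<and> distinct p"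
  unfolding is_gpath_def is_walk_iff by auto

lemma is_walk_append:
  assumes "xs \<noteq> []" "ys \<noteq> []"
  shows "is_walk A (xs @ ys) \<longleftrightarrow> is_walk A xs \<and> is_walk A ys \<and> mat_adj A (last xs) (hd ys)"
  using assms
proof (induction xs rule: induct_list012)
  case (2 x)
  then show ?case by (cases ys) (auto simp: mat_adj_def)
qed auto

lemma is_walk_append_tl:
  assumes "is_walk A xs" "is_walk A ys" "last xs = hd ys"
  shows "is_walk A (xs @ tl ys)"
proof (cases "tl ys")
  case Nil then show ?thesis using assms(1) by simp
next
  case (Cons y zs)
  then have "ys = hd ys # y # zs" using assms(2) by (cases ys) auto
  then show ?thesis
    using assms is_walk_append[of xs "y # zs" A] Cons by (metis is_walk.simps(1,3) list.sel(1))
qed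

lemma last_append_tl:
  assumes "xs \<noteq> []" "ys \<noteq> []" "last xs = hd ys"
  shows "last (xs @ tl ys) = last ys"
  using assms by (cases ys) auto

lemma mat_adj_sym:
  assumes "A\<^sup>T = A" "mat_adj A x y"
  shows "mat_adj A y x"
  using assms by (metis index_transpose_mat(1,2,3) mat_adj_def)

lemma is_walk_rev:
  assumes "A\<^sup>T = A" "is_walk A xs"
  shows "is_walk A (rev xs)"
  using assms(2)
proof (induction xs rule: induct_list012)
  case (3 x y zs)
  then have "is_walk A (rev (y # zs))" "mat_adj A y x" "x < dim_row A"
    using mat_adj_sym[OF assms(1)] by (auto simp: mat_adj_def)
  then show ?case using is_walk_append[of "rev (y # zs)" "[x]" A] by simp
qed simp_all

lemma walk_contains_path:
  assumes "is_walk A xs"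
  obtains ys where "is_gpath A ys" "hd ys = hd xs" "last ys = last xs" "set ys \<subseteq> set xs"
  using assms
proof (induction "length xs" arbitrary: xs rule: less_induct)
  case less
  show ?case
  proof (cases "distinct xs")
    case True then show ?thesis using less.prems by (auto simp: is_gpath_iff_walk)
  next
    case False
    then obtain as x bs cs where xs: "xs = as @ [x] @ bs @ [x] @ cs"
      using not_distinct_decomp by blast
    define zs where "zs = as @ [x] @ cs"
    have "is_walk A ((as @ [x]) @ (bs @ [x] @ cs))" "is_walk A ((as @ [x] @ bs) @ (x # cs))"
      using less.prems xs by simp_all
    then have "is_walk A (as @ [x])" "is_walk A (x # cs)"
      using is_walk_append[of "as @ [x]" "bs @ [x] @ cs" A]
        is_walk_append[of "as @ [x] @ bs" "x # cs" A] by simp_all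
    then have "is_walk A zs"
      using is_walk_append_tl[of A "as @ [x]" "x # cs"] by (simp add: zs_def)
    moreover have "length zs < length xs" "hd zs = hd xs" "last zs = last xs" "set zs \<subseteq> set xs"
      using xs by (auto simp: zs_def hd_append)
    ultimately show ?thesis using less.hyps less.prems(1) by (metis order.trans)
  qed
qed

lemma gpath_from_Cons_Cons:
  "gpath_from A u v (x # y # p) \<longleftrightarrow>
     x = u \<and> mat_adj A u y \<and> u \<notin> set (y # p) \<and> gpath_from A y v (y # p)"
  by (auto simp: gpath_from_def is_gpath_iff_walk)

lemma gpath_from_self:
  assumes "gpath_from A u u p"
  shows "p = [u]"
proof (cases p)
  case (Cons x p')
  then show ?thesis
    using assms by (cases p' rule: rev_cases) (auto simp: gpath_from_def is_gpath_def)
qed (use assms in \<open>simp add: gpath_from_def is_gpath_def\<close>)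

lemma acyclic_walk_between_neighbours_visits:
  assumes sym: "A\<^sup>T = A" and acyc: "acyclic_mat A"
    and ua: "mat_adj A u a" and ub: "mat_adj A u b" and ab: "a \<noteq> b"
    and W: "is_walk A W" "hd W = a" "last W = b"
  shows "u \<in> set W"
proof (rule ccontr)
  assume u: "u \<notin> set W"
  obtain ys where ys: "is_gpath A ys" "hd ys = a" "last ys = b" "set ys \<subseteq> set W"
    using walk_contains_path[OF W(1)] W(2,3) by metis
  obtain y ys' where ys_eq: "ys = a # y # ys'"
    using ys ab by (cases ys rule: remdups_adj.cases) (auto simp: is_gpath_def)
  have "is_gcycle A (u # ys)"
    using ys u ua mat_adj_sym[OF sym ub] ys_eq
    by (auto simp: is_gcycle_def is_gpath_iff_walk)
  then show False using acyc by (simp add: acyclic_mat_def)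
qed

lemma gpath_from_unique:
  assumes sym: "A\<^sup>T = A" and acyc: "acyclic_mat A"
  shows "gpath_from A u v p \<Longrightarrow> gpath_from A u v q \<Longrightarrow> p = q"
proof (induction p arbitrary: u q)
  case Nil
  then show ?case by (simp add: gpath_from_def is_gpath_def)
next
  case (Cons x p')
  show ?case
  proof (cases "u = v")
    case True
    then show ?thesis using Cons.prems gpath_from_self by metis
  next
    case False
    obtain a p1 where p: "x # p' = u # a # p1"
      using Cons.prems(1) False gpath_from_self
      by (cases p') (auto simp: gpath_from_def)
    obtain b q1 where q: "q = u # b # q1"
      using Cons.prems(2) False gpath_from_self
      by (cases q rule: remdups_adj.cases) (auto simp: gpath_from_def is_gpath_def)
    have pa: "mat_adj A u a" "u \<notin> set (a # p1)" "gpath_from A a v (a # p1)"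
      using Cons.prems(1) unfolding p gpath_from_Cons_Cons by auto
    have qb: "mat_adj A u b" "u \<notin> set (b # q1)" "gpath_from A b v (b # q1)"
      using Cons.prems(2) unfolding q gpath_from_Cons_Cons by auto
    show ?thesis
    proof (cases "a = b")
      case True
      then show ?thesis using Cons.IH[of a "b # q1"] p q pa(3) qb(3) by simp
    next
      case False
      define W where "W = (a # p1) @ tl (rev (b # q1))"
      have ends: "last (a # p1) = v" "hd (rev (b # q1)) = v"
        using pa(3) qb(3) unfolding hd_rev by (simp_all add: gpath_from_def)
      have "is_walk A (a # p1)" "is_walk A (b # q1)"
        using pa(3) qb(3) by (simp_all add: gpath_from_def is_gpath_iff_walk)
      then have "is_walk A W"
        unfolding W_def using ends by (intro is_walk_append_tl is_walk_rev[OF sym]) simp_all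
      moreover have "hd W = a" "last W = b"
        using last_append_tl[of "a # p1" "rev (b # q1)"] ends by (simp_all add: W_def last_rev)
      moreover have "set W \<subseteq> set (a # p1) \<union> set (rev (b # q1))"
        unfolding W_def by (cases "rev (b # q1)") auto
      then have "u \<notin> set W" using pa(2) qb(2) by auto
      ultimately show ?thesis
        using acyclic_walk_between_neighbours_visits[OF sym acyc pa(1) qb(1) False] by blast
    qed
  qed
qed

lemma upath_eq:
  assumes "A\<^sup>T = A" "acyclic_mat A" "gpath_from A u v p"
  shows "upath A u v = p"
  unfolding upath_def using gpath_from_unique[OF assms(1,2)] assms(3) by blast

lemma gpath_from_single: "u < dim_row A \<Longrightarrow> gpath_from A u u [u]"
  by (simp add: gpath_from_def is_gpath_def)

lemma gpath_from_snoc: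
  assumes "gpath_from A u v p" "k \<notin> set p" "mat_adj A v k"
  shows "gpath_from A u k (p @ [k])"
proof -
  have "p \<noteq> []" "is_walk A [k]" using assms by (auto simp: gpath_from_def is_gpath_def mat_adj_def)
  then show ?thesis
    using assms is_walk_append[of p "[k]" A] by (auto simp: gpath_from_def is_gpath_iff_walk)
qed

lemma gpath_from_snocE:
  assumes "gpath_from A u v p" "v \<noteq> u"
  obtains p' where "p = p' @ [v]" "gpath_from A u (last p') p'" "mat_adj A (last p') v"
proof -
  obtain p' where p: "p = p' @ [v]"
    using assms(1) by (cases p rule: rev_cases) (auto simp: gpath_from_def is_gpath_def)
  have "p' \<noteq> []" using assms p by (auto simp: gpath_from_def)
  then show thesis
    using that assms is_walk_append[of p' "[v]" A] p
    by (auto simp: gpath_from_def is_gpath_iff_walk)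
qed

definition reachable :: "real mat \<Rightarrow> nat \<Rightarrow> nat \<Rightarrow> bool" where
  "reachable A u v \<longleftrightarrow> (\<exists>p. gpath_from A u v p)"

lemma reachable_if_on_gpath:
  assumes p: "gpath_from A u v p" and j: "j \<in> set p"
  shows "reachable A u j"
proof -
  obtain i where i: "i < length p" "p ! i = j" using j by (auto simp: in_set_conv_nth)
  have "is_gpath A (take (Suc i) p)"
    using p unfolding gpath_from_def is_gpath_def by (auto dest: in_set_takeD)
  moreover have "hd (take (Suc i) p) = u" using p by (simp add: gpath_from_def hd_take)
  moreover have "last (take (Suc i) p) = j" using i by (simp add: take_Suc_conv_app_nth)
  ultimately show ?thesis unfolding reachable_def gpath_from_def by blast
qed

lemma reachable_adj:
  assumes "reachable A u k" "mat_adj A k j"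
  shows "reachable A u j"
proof -
  obtain q where q: "gpath_from A u k q" using assms(1) by (auto simp: reachable_def)
  show ?thesis
  proof (cases "j \<in> set q")
    case True then show ?thesis using reachable_if_on_gpath[OF q] by blast
  next
    case False then show ?thesis
      using gpath_from_snoc[OF q False assms(2)] by (auto simp: reachable_def)
  qed
qed

lemma acyclic_gpath_end_not_adj:
  assumes acyc: "acyclic_mat A" and P: "is_gpath A (P @ [j])"
    and k: "k \<in> set P" "k \<noteq> last P"
  shows "\<not> mat_adj A j k"
proof
  assume adj: "mat_adj A j k"
  define Q where "Q = P @ [j]"
  obtain i where i: "i < length P" "P ! i = k" using k(1) by (auto simp: in_set_conv_nth)
  have "P \<noteq> []" using k(1) by auto
  then have "i \<noteq> length P - 1" using i k by (auto simp: last_conv_nth)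
  then have Q: "i + 2 < length Q" "Q ! i = k" "last Q = j"
    using i by (simp_all add: Q_def nth_append)
  have "is_gpath A (drop i Q)"
    using P Q unfolding Q_def[symmetric] is_gpath_def by (auto dest: in_set_dropD)
  then have "is_gcycle A (drop i Q)"
    using Q adj by (simp add: is_gcycle_def hd_drop_conv_nth)
  then show False using acyc by (auto simp: acyclic_mat_def)
qed

lemma path_weight_snoc:
  assumes "p \<noteq> []"
  shows "path_weight A (p @ [k]) = path_weight A p * A $$ (last p, k)"
proof -
  obtain m where m: "length p = Suc m" using assms by (cases p) auto
  have "(\<Prod>i<m. A $$ ((p @ [k]) ! i, (p @ [k]) ! Suc i)) = (\<Prod>i<m. A $$ (p ! i, p ! Suc i))"
    by (rule prod.cong) (auto simp: nth_append m)
  then show ?thesis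
    using m assms by (simp add: path_weight_def nth_append last_conv_nth)
qed

section \<open>The eigenvector equations\<close>

definition alpha :: "real mat \<Rightarrow> nat \<Rightarrow> real \<Rightarrow> nat \<Rightarrow> real" where
  "alpha A u x v = (if reachable A u v
     then path_weight A (upath A u v) * det_on (char_entry A x) ({..<dim_row A} - set (upath A u v))
     else 0)"

lemma alpha_vec_eq:
  assumes "A \<in> carrier_mat n n"
  shows "alpha_vec A u x = vec n (alpha A u x)"
proof -
  have n: "dim_row A = n" using assms by simp
  show ?thesis unfolding alpha_vec_def alpha_def reachable_def phi_del_mat[OF assms] n ..
qed

lemma char_matrix_mult_vec:
  assumes A: "A \<in> carrier_mat n n"
  shows "char_matrix A x *\<^sub>v vec n f = vec n (\<lambda>j. - (\<Sum>k<n. char_entry A x j k * f k))"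
proof (rule eq_vecI)
  fix j assume "j < dim_vec (vec n (\<lambda>j. - (\<Sum>k<n. char_entry A x j k * f k)))"
  then have j: "j < n" by simp
  have "(char_matrix A x *\<^sub>v vec n f) $ j = (\<Sum>k<n. (A $$ (j, k) - (if j = k then x else 0)) * f k)"
    using A j by (auto simp: char_matrix_def scalar_prod_def lessThan_atLeast0 intro!: sum.cong)
  also have "\<dots> = - (\<Sum>k<n. char_entry A x j k * f k)"
    by (simp add: char_entry_def sum_negf[symmetric] algebra_simps)
  finally show "(char_matrix A x *\<^sub>v vec n f) $ j = vec n (\<lambda>j. - (\<Sum>k<n. char_entry A x j k * f k)) $ j"
    using j by simp
qed (use A in \<open>simp add: char_matrix_def\<close>)

context
  fixes A :: "real mat" and n u :: nat and x :: real
  assumes A: "A \<in> carrier_mat n n" and sym: "A\<^sup>T = A" and acyc: "acyclic_mat A" and u: "u < n"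
begin

lemma alpha_gpath:
  assumes "gpath_from A u j P"
  shows "alpha A u x j = path_weight A P * det_on (char_entry A x) ({..<n} - set P)"
proof -
  have "reachable A u j" using assms by (auto simp: reachable_def)
  moreover have "upath A u j = P" by (rule upath_eq[OF sym acyc assms])
  ultimately show ?thesis using A by (simp add: alpha_def)
qed

lemma alpha_root: "alpha A u x u = det_on (char_entry A x) ({..<n} - {u})"
  using alpha_gpath[OF gpath_from_single] A u by (simp add: path_weight_def)

lemma char_entry_sym:
  assumes "i < n" "j < n"
  shows "char_entry A x i j = char_entry A x j i"
proof -
  have "A $$ (i, j) = A\<^sup>T $$ (j, i)" using assms A by simp
  then show ?thesis using sym by (simp add: char_entry_def)
qed

lemma sum_beyond_gpath_end:
  assumes P: "gpath_from A u j P"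
  shows "char_entry A x j j * alpha A u x j + (\<Sum>k\<in>{..<n} - set P. char_entry A x j k * alpha A u x k)
    = path_weight A P * det_on (char_entry A x) (insert j ({..<n} - set P))"
proof -
  let ?B = "char_entry A x" and ?R = "{..<n} - set P"
  have "j \<in> set P" using P by (auto simp: gpath_from_def is_gpath_def)
  then have j: "j < n" "j \<in> set P" using P A by (auto simp: gpath_from_def is_gpath_def)
  have step: "?B j k * alpha A u x k = - (path_weight A P * (?B j k * ?B k j * det_on ?B (?R - {k})))"
    if k: "k \<in> ?R" for k
  proof (cases "?B j k = 0")
    case False
    have k': "k < n" "k \<notin> set P" "j \<noteq> k" using k j by auto
    then have "mat_adj A j k" using mat_adj_if_char_entry_nonzero[OF A j(1)] False by blast
    then have "gpath_from A u k (P @ [k])" using gpath_from_snoc[OF P] k' by blast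
    moreover have "last P = j" "P \<noteq> []" using P by (auto simp: gpath_from_def is_gpath_def)
    moreover have "{..<n} - set (P @ [k]) = ?R - {k}" by auto
    ultimately have "alpha A u x k = path_weight A P * A $$ (j, k) * det_on ?B (?R - {k})"
      using alpha_gpath path_weight_snoc by metis
    then show ?thesis using char_entry_sym[OF j(1) k'(1)] k' by (simp add: char_entry_def)
  qed simp
  have "det_on ?B (insert j ?R) = ?B j j * det_on ?B ?R
      - (\<Sum>k\<in>?R. ?B j k * ?B k j * det_on ?B (?R - {k}))"
    using det_on_char_entry_expand_vertex[OF A acyc, of "insert j ?R" j x] j
    by (simp add: insert_Diff_if)
  moreover have "(\<Sum>k\<in>?R. ?B j k * alpha A u x k)
      = - (path_weight A P * (\<Sum>k\<in>?R. ?B j k * ?B k j * det_on ?B (?R - {k})))"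
    using step by (simp add: sum_negf sum_distrib_left)
  moreover have "alpha A u x j = path_weight A P * det_on ?B ?R" by (rule alpha_gpath[OF P])
  ultimately show ?thesis by (simp only:) (simp add: algebra_simps)
qed

lemma char_row_alpha_eq_0_root:
  assumes "det_on (char_entry A x) {..<n} = 0"
  shows "(\<Sum>k<n. char_entry A x u k * alpha A u x k) = 0"
proof -
  have P: "gpath_from A u u [u]" using gpath_from_single A u by simp
  have "(\<Sum>k<n. char_entry A x u k * alpha A u x k) = char_entry A x u u * alpha A u x u
      + (\<Sum>k\<in>{..<n} - {u}. char_entry A x u k * alpha A u x k)"
    using u by (simp add: sum.remove)
  also have "\<dots> = det_on (char_entry A x) (insert u ({..<n} - {u}))"
    using sum_beyond_gpath_end[OF P] by (simp add: path_weight_def)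
  also have "insert u ({..<n} - {u}) = {..<n}" using u by auto
  finally show ?thesis using assms by simp
qed

lemma char_row_alpha_eq_0_reachable:
  assumes j: "j < n" "j \<noteq> u" and r: "reachable A u j"
  shows "(\<Sum>k<n. char_entry A x j k * alpha A u x k) = 0"
proof -
  let ?B = "char_entry A x" and ?a = "alpha A u x" and ?N = "{..<n}"
  obtain P where P: "gpath_from A u j P" using r by (auto simp: reachable_def)
  obtain P' where P': "P = P' @ [j]" "gpath_from A u (last P') P'" "mat_adj A (last P') j"
    using gpath_from_snocE[OF P j(2)] by blast
  define i where "i = last P'"
  have P'_ne: "P' \<noteq> []" using P' by (auto simp: gpath_from_def is_gpath_def)
  then have i: "i \<in> set P'" "j \<notin> set P'" "i \<noteq> j" "i < n"
    using P P' A by (auto simp: i_def gpath_from_def is_gpath_def mat_adj_def)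
  have PN: "set P \<subseteq> ?N" using P A by (auto simp: gpath_from_def is_gpath_def)
  have ins: "insert j (?N - set P) = ?N - set P'" using P' i j by auto
  have off_path: "(\<Sum>k\<in>set P' - {i}. ?B j k * ?a k) = 0"
  proof (intro sum.neutral ballI)
    fix k assume k: "k \<in> set P' - {i}"
    have "\<not> mat_adj A j k"
      using acyclic_gpath_end_not_adj[OF acyc] P P' k by (auto simp: i_def gpath_from_def)
    then show "?B j k * ?a k = 0"
      using mat_adj_if_char_entry_nonzero[OF A j(1)] k i PN P' by fastforce
  qed
  have "(\<Sum>k<n. ?B j k * ?a k) = (\<Sum>k\<in>?N - set P. ?B j k * ?a k) + (\<Sum>k\<in>set P. ?B j k * ?a k)"
    using PN by (simp add: sum.subset_diff)
  also have "(\<Sum>k\<in>set P. ?B j k * ?a k) = ?B j j * ?a j + ?B j i * ?a i"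
    using P' i off_path by (simp add: sum.remove)
  also have "(\<Sum>k\<in>?N - set P. ?B j k * ?a k) + (?B j j * ?a j + ?B j i * ?a i)
      = path_weight A P * det_on ?B (?N - set P') + ?B j i * ?a i"
    using sum_beyond_gpath_end[OF P, unfolded ins] by linarith
  also have "\<dots> = 0"
    using alpha_gpath[OF P'(2)] path_weight_snoc[OF P'_ne, of A j] char_entry_sym[OF j(1) i(4)]
      P'(1) i(3)
    by (simp add: i_def char_entry_def)
  finally show ?thesis .
qed

lemma char_row_alpha_eq_0_unreachable:
  assumes j: "j < n" and nr: "\<not> reachable A u j"
  shows "(\<Sum>k<n. char_entry A x j k * alpha A u x k) = 0"
proof (intro sum.neutral ballI)
  fix k assume k: "k \<in> {..<n}"
  show "char_entry A x j k * alpha A u x k = 0"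
  proof (cases "k \<noteq> j \<and> char_entry A x j k \<noteq> 0")
    case True
    then have "mat_adj A k j"
      using mat_adj_if_char_entry_nonzero[OF A, of k j x] char_entry_sym[of j k] j k by auto
    then have "\<not> reachable A u k" using nr reachable_adj by blast
    then show ?thesis by (simp add: alpha_def)
  qed (use nr in \<open>auto simp: alpha_def\<close>)
qed

end

theorem theorem3p1:
  fixes n :: nat and A :: "real mat" and lam :: real and u :: nat
  assumes "A \<in> carrier_mat n n"
    and "A\<^sup>T = A"
    and "acyclic_mat A"
    and "eigenvalue A lam"
    and "order lam (char_poly A) = 1"
    and "u < n"
    and "phi (del_mat A {u}) lam \<noteq> 0"
  shows "eigenvector A (alpha_vec A u lam) lam"
proof -
  note A = assms(1) and ctx = assms(1-3,6)
  have "det_on (char_entry A lam) {..<n} = 0"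
    using assms(4) eigenvalue_root_char_poly[OF A] phi_eq_det_on[OF A] by (simp add: phi_def)
  then have "(\<Sum>k<n. char_entry A lam j k * alpha A u lam k) = 0" if "j < n" for j
    using char_row_alpha_eq_0_root[OF ctx] char_row_alpha_eq_0_reachable[OF ctx that]
      char_row_alpha_eq_0_unreachable[OF ctx that]
    by (cases "j = u") auto
  then have "char_matrix A lam *\<^sub>v alpha_vec A u lam = 0\<^sub>v n"
    by (auto simp: alpha_vec_eq[OF A] char_matrix_mult_vec[OF A])
  moreover have "alpha_vec A u lam \<noteq> 0\<^sub>v n"
  proof
    assume "alpha_vec A u lam = 0\<^sub>v n"
    then have "alpha A u lam u = 0" using assms(6) by (simp add: alpha_vec_eq[OF A] vec_eq_iff)
    then show False using assms(7) alpha_root[OF ctx] by (simp add: phi_del_mat[OF A])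
  qed
  ultimately show ?thesis
    by (simp add: eigenvector_char_matrix[OF A] alpha_vec_eq[OF A])
qed

end
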